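(* Let $B$ be a nilpotent $n\times n$ matrix with $\mathrm{sh}(B)=(\lambda_1,\lambda_2)$, $\lambda_1\ge\lambda_2\ge1$, $n=\lambda_1+\lambda_2$. Choose integers $j,\ell$ with $0\le j\le\ell<\lambda_2$ and put $w=\lambda_1-\lambda_2+j+\ell$, assuming $w\ge1$. (a) If there is an integer $k$ with $\lambda_2\le kw<\lambda_1$, then $\big((2k+1)^{\lambda_1-kw},(2k)^{w+\lambda_2-\lambda_1},(2k-1)^{kw-\lambda_2}\big)\in\mathcal{P}(\mathcal{N}_B)$. (b) If there is an integer $k$ with $\lambda_1-\ell\le kw<\lambda_2-j$, then $\big((2k+2)^{\lambda_2-kw-j},(2k+1)^{w+j-\ell},(2k)^{kw+\ell-\lambda_2}\big)\in\mathcal{P}(\mathcal{N}_B)$. (c) If neither of the conditions in (a) and (b) holds, then $r(n,w)\in\mathcal{P}(\mathcal{N}_B)$.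
   Context: $\mathbb{F}$ is an algebraically closed field of characteristic $0$. For a nilpotent matrix $A$, $\mathrm{sh}(A)$ is the partition of $n$ given by the sizes of the Jordan blocks of its Jordan canonical form; $\mathcal{N}_B$ is the set of nilpotent $n\times n$ matrices commuting with $B$ and $\mathcal{P}(\mathcal{N}_B)=\{\mathrm{sh}(A):A\in\mathcal{N}_B\}$. The notation $(m_1^{r_1},m_2^{r_2},\ldots)$ denotes the partition with $r_i$ parts equal to $m_i$ (parts with exponent $0$ omitted). For $1\le t\le n$, $r(n,t)$ denotes the unique partition of $n$ with exactly $t$ parts whose largest and smallest parts differ by at most $1$, i.e. $r(n,t)=(\lceil n/t\rceil^{\rho},\lfloor n/t\rfloor^{t-\rho})$ with $\rho=n-t\lfloor n/t\rfloor$ (an "almost rectangular partition"); when $t>n$ one interprets $r(n,t)=(1^n)$. *)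

theory Defs
  imports "Jordan_Normal_Form.Jordan_Normal_Form_Uniqueness"
begin

definition nilpotent_mat :: "'a :: semiring_1 mat \<Rightarrow> bool" where
  "nilpotent_mat A \<longleftrightarrow> square_mat A \<and> (\<exists>k. A ^\<^sub>m k = 0\<^sub>m (dim_row A) (dim_col A))"

text \<open>sh(A) = p: the multiset of Jordan block sizes of A is the partition p
  (partitions are represented as multisets of positive naturals).\<close>
definition has_shape :: "'a :: semiring_1 mat \<Rightarrow> nat multiset \<Rightarrow> bool" where
  "has_shape A p \<longleftrightarrow> (\<exists>n_as. jordan_nf A n_as \<and> mset (map fst n_as) = p)"

definition shapes_NB :: "nat \<Rightarrow> 'a :: semiring_1 mat \<Rightarrow> nat multiset set" where
  "shapes_NB n B = {p. \<exists>A \<in> carrier_mat n n. nilpotent_mat A \<and> A * B = B * A \<and> has_shape A p}"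

definition almost_rect :: "nat \<Rightarrow> nat \<Rightarrow> nat multiset" where
  "almost_rect n t =
     (if t \<le> n then replicate_mset (n mod t) (n div t + 1) + replicate_mset (t - n mod t) (n div t)
      else replicate_mset n 1)"

end

theory Submission
  imports Defs "Jordan_Normal_Form.Jordan_Normal_Form_Existence"
begin

text \<open>Numbering the two Jordan chains of B as positions 0, ..., l1 - 1 and l1, ..., l1 + l2 - 1 turns
  B into the 0/1 matrix of the shift x \<mapsto> x + 1 inside each chain. For a + b = w, the partial map
  sending position x of the first chain to position x + a of the second, and position y of the
  second chain to position y + b of the first, commutes with the shift, and its square is the shift
  by w inside each chain. Its matrix is triangular after sorting the positions along its orbits, and
  its Jordan type is determined by the ranks of its powers, i.e. by the number of positions where
  its t-th iterate is defined: (l1 - mw) + (l2 - mw) for t = 2m and (l2 - a - mw) + (l1 - b - mw)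
  for t = 2m + 1. For a = l, b = l1 - l2 + j these are the rank counts of the partitions in (a)
  and (b); splitting j + l as evenly as possible between a and b makes them n - tw, the counts of
  r(n, w), as soon as (a) does not apply.\<close>

section \<open>Sorting by a key\<close>

definition key_rank :: "nat \<Rightarrow> (nat \<Rightarrow> 'b::linorder) \<Rightarrow> nat \<Rightarrow> nat" where
  "key_rank n K x = card {y. y < n \<and> K y < K x}"

lemma key_rank_less:
  assumes "x < n" "y < n" "K x < K y"
  shows "key_rank n K x < key_rank n K y"
  unfolding key_rank_def using assms by (intro psubset_card_mono) auto

lemma key_rank_less_iff:
  assumes "inj_on K {..<n}" "x < n" "y < n"
  shows "key_rank n K x < key_rank n K y \<longleftrightarrow> K x < K y"
  using assms key_rank_less[of x n y K] key_rank_less[of y n x K]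
  by (cases "K x" "K y" rule: linorder_cases) (auto dest: inj_onD)

lemma key_rank_bij:
  assumes "inj_on K {..<n}"
  shows "bij_betw (key_rank n K) {..<n} {..<n}"
proof -
  have "key_rank n K x < n" if "x < n" for x
  proof -
    have "{y. y < n \<and> K y < K x} \<subset> {..<n}" using that by auto
    thus ?thesis unfolding key_rank_def using psubset_card_mono[of "{..<n}"] by auto
  qed
  moreover have "inj_on (key_rank n K) {..<n}"
  proof (rule inj_onI)
    fix x y assume "x \<in> {..<n}" "y \<in> {..<n}" "key_rank n K x = key_rank n K y"
    hence "K x = K y" using key_rank_less_iff[OF assms, of x y] key_rank_less_iff[OF assms, of y x] by auto
    thus "x = y" using assms \<open>x \<in> {..<n}\<close> \<open>y \<in> {..<n}\<close> by (auto dest: inj_onD)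
  qed
  ultimately show ?thesis
    using endo_inj_surj[of "{..<n}" "key_rank n K"] by (auto simp: bij_betw_def)
qed

lemma sorting_permutation:
  fixes K :: "nat \<Rightarrow> 'b :: linorder"
  assumes "inj_on K {..<n}"
  obtains \<tau> where "bij_betw \<tau> {..<n} {..<n}"
    and "\<And>i i'. i < n \<Longrightarrow> i' < n \<Longrightarrow> K (\<tau> i) < K (\<tau> i') \<longleftrightarrow> i < i'"
proof
  let ?\<rho> = "key_rank n K"
  have bij: "bij_betw ?\<rho> {..<n} {..<n}" by (rule key_rank_bij[OF assms])
  show "bij_betw (the_inv_into {..<n} ?\<rho>) {..<n} {..<n}" by (rule bij_betw_the_inv_into[OF bij])
  have \<tau>: "the_inv_into {..<n} ?\<rho> i < n" "?\<rho> (the_inv_into {..<n} ?\<rho> i) = i" if "i < n" for i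
    using that bij_betwE[OF bij_betw_the_inv_into[OF bij]] f_the_inv_into_f_bij_betw[OF bij] by auto
  fix i i' assume "i < n" "i' < n"
  thus "K (the_inv_into {..<n} ?\<rho> i) < K (the_inv_into {..<n} ?\<rho> i') \<longleftrightarrow> i < i'"
    using key_rank_less_iff[OF assms \<tau>(1) \<tau>(1), of i i'] \<tau>(2) by simp
qed

section \<open>Matrices of partial maps\<close>

definition pmap_mat :: "nat \<Rightarrow> (nat \<rightharpoonup> nat) \<Rightarrow> 'a :: semiring_1 mat" where
  "pmap_mat n f = mat n n (\<lambda>(i, j). if f i = Some j then 1 else 0)"

definition pmap_closed :: "nat \<Rightarrow> (nat \<rightharpoonup> nat) \<Rightarrow> bool" where
  "pmap_closed n f \<longleftrightarrow> (\<forall>i<n. \<forall>j. f i = Some j \<longrightarrow> j < n)"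

fun pmap_pow :: "(nat \<rightharpoonup> nat) \<Rightarrow> nat \<Rightarrow> nat \<rightharpoonup> nat" where
  "pmap_pow f 0 = Some"
| "pmap_pow f (Suc k) = f \<circ>\<^sub>m pmap_pow f k"

lemma pmap_mat_carrier [simp]: "pmap_mat n f \<in> carrier_mat n n"
  and pmap_mat_dim [simp]: "dim_row (pmap_mat n f) = n" "dim_col (pmap_mat n f) = n"
  unfolding pmap_mat_def by auto

lemma pmap_mat_index [simp]:
  "i < n \<Longrightarrow> j < n \<Longrightarrow> pmap_mat n f $$ (i, j) = (if f i = Some j then 1 else 0)"
  unfolding pmap_mat_def by auto

lemma pmap_mat_cong: "(\<And>i. i < n \<Longrightarrow> f i = g i) \<Longrightarrow> pmap_mat n f = pmap_mat n g"
  by (intro eq_matI) auto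

lemma pmap_mat_Some: "pmap_mat n Some = 1\<^sub>m n"
  by (intro eq_matI) auto

lemma pmap_mat_empty: "pmap_mat n Map.empty = 0\<^sub>m n n"
  by (intro eq_matI) auto

lemma pmap_closedD: "pmap_closed n f \<Longrightarrow> i < n \<Longrightarrow> f i = Some j \<Longrightarrow> j < n"
  unfolding pmap_closed_def by blast

lemma pmap_mat_mult:
  assumes "pmap_closed n f"
  shows "(pmap_mat n f :: 'a :: semiring_1 mat) * pmap_mat n g = pmap_mat n (g \<circ>\<^sub>m f)"
proof (rule eq_matI)
  fix i k assume "i < dim_row (pmap_mat n (g \<circ>\<^sub>m f) :: 'a mat)"
    and "k < dim_col (pmap_mat n (g \<circ>\<^sub>m f) :: 'a mat)"
  hence i: "i < n" and k: "k < n" by auto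
  have "(pmap_mat n f * pmap_mat n g :: 'a mat) $$ (i, k)
      = (\<Sum>j<n. pmap_mat n f $$ (i, j) * pmap_mat n g $$ (j, k))"
    using i k by (simp add: scalar_prod_def atLeast0LessThan)
  also have "\<dots> = (if (g \<circ>\<^sub>m f) i = Some k then 1 else 0)"
  proof (cases "f i")
    case (Some j0)
    have "j0 < n" using pmap_closedD[OF assms i Some] .
    hence "(\<Sum>j<n. pmap_mat n f $$ (i, j) * (pmap_mat n g $$ (j, k) :: 'a))
        = (\<Sum>j\<in>{j0}. pmap_mat n f $$ (i, j) * pmap_mat n g $$ (j, k))"
      using i k Some by (intro sum.mono_neutral_right) auto
    thus ?thesis using i k \<open>j0 < n\<close> Some by simp
  qed (use i k in simp)
  finally show "(pmap_mat n f * pmap_mat n g :: 'a mat) $$ (i, k)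
      = pmap_mat n (g \<circ>\<^sub>m f) $$ (i, k)"
    using i k by simp
qed auto

lemma pmap_closed_comp: "pmap_closed n f \<Longrightarrow> pmap_closed n g \<Longrightarrow> pmap_closed n (g \<circ>\<^sub>m f)"
  unfolding pmap_closed_def map_comp_Some_iff by blast

lemma pmap_closed_pow: "pmap_closed n f \<Longrightarrow> pmap_closed n (pmap_pow f k)"
  by (induction k) (simp_all add: pmap_closed_comp, simp add: pmap_closed_def)

lemma pmap_mat_pow:
  assumes "pmap_closed n f"
  shows "(pmap_mat n f :: 'a :: semiring_1 mat) ^\<^sub>m k = pmap_mat n (pmap_pow f k)"
proof (induction k)
  case (Suc k)
  thus ?case using pmap_mat_mult[OF pmap_closed_pow[OF assms, of k], of f] by simp
qed (simp add: pmap_mat_Some)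

lemma pmap_pow_inj:
  assumes "pmap_closed n f" "inj_on f (dom f \<inter> {..<n})"
  shows "inj_on (pmap_pow f k) (dom (pmap_pow f k) \<inter> {..<n})"
proof (induction k)
  case (Suc k)
  show ?case
  proof (rule inj_onI)
    fix x y assume x: "x \<in> dom (pmap_pow f (Suc k)) \<inter> {..<n}"
      and y: "y \<in> dom (pmap_pow f (Suc k)) \<inter> {..<n}"
      and eq: "pmap_pow f (Suc k) x = pmap_pow f (Suc k) y"
    obtain u where u: "pmap_pow f k x = Some u" "f u \<noteq> None"
      using x by (auto simp: map_comp_def split: option.splits)
    obtain v where v: "pmap_pow f k y = Some v" "f v \<noteq> None"
      using y by (auto simp: map_comp_def split: option.splits)
    have "u < n" "v < n"
      using pmap_closed_pow[OF assms(1)] u(1) v(1) x y by (auto dest: pmap_closedD)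
    moreover have "f u = f v" using eq u(1) v(1) by simp
    ultimately have "u = v" using inj_onD[OF assms(2)] u(2) v(2) by blast
    thus "x = y" using inj_onD[OF Suc.IH] u(1) v(1) x y by (simp add: domI)
  qed
qed (simp add: inj_on_def)

lemma pmap_mat_perm_inverse:
  assumes "bij_betw \<sigma> {..<n} {..<n}"
  shows "(pmap_mat n (Some \<circ> the_inv_into {..<n} \<sigma>) :: 'a :: semiring_1 mat)
      * pmap_mat n (Some \<circ> \<sigma>) = 1\<^sub>m n"
    and "(pmap_mat n (Some \<circ> \<sigma>) :: 'a :: semiring_1 mat)
      * pmap_mat n (Some \<circ> the_inv_into {..<n} \<sigma>) = 1\<^sub>m n"
proof -
  let ?\<tau> = "the_inv_into {..<n} \<sigma>"
  have \<tau>: "bij_betw ?\<tau> {..<n} {..<n}" by (rule bij_betw_the_inv_into[OF assms])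
  have "pmap_closed n (Some \<circ> \<sigma>)" "pmap_closed n (Some \<circ> ?\<tau>)"
    using bij_betwE[OF assms] bij_betwE[OF \<tau>] unfolding pmap_closed_def by auto
  moreover have "\<sigma> (?\<tau> i) = i" "?\<tau> (\<sigma> i) = i" if "i < n" for i
    using that f_the_inv_into_f_bij_betw[OF assms] the_inv_into_f_f[OF bij_betw_imp_inj_on[OF assms]]
    by auto
  ultimately have "pmap_mat n ((Some \<circ> \<sigma>) \<circ>\<^sub>m (Some \<circ> ?\<tau>)) = pmap_mat n Some"
    and "pmap_mat n ((Some \<circ> ?\<tau>) \<circ>\<^sub>m (Some \<circ> \<sigma>)) = pmap_mat n Some"
    by (auto intro: pmap_mat_cong)
  with \<open>pmap_closed n (Some \<circ> \<sigma>)\<close> \<open>pmap_closed n (Some \<circ> ?\<tau>)\<close>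
  show "(pmap_mat n (Some \<circ> ?\<tau>) :: 'a mat) * pmap_mat n (Some \<circ> \<sigma>) = 1\<^sub>m n"
    and "(pmap_mat n (Some \<circ> \<sigma>) :: 'a mat) * pmap_mat n (Some \<circ> ?\<tau>) = 1\<^sub>m n"
    by (simp_all only: pmap_mat_mult pmap_mat_Some)
qed

lemma pmap_mat_similar:
  assumes bij: "bij_betw \<sigma> {..<n} {..<n}" and "pmap_closed n f"
    and conj: "\<And>x. x < n \<Longrightarrow> g (\<sigma> x) = map_option \<sigma> (f x)"
  shows "similar_mat (pmap_mat n g :: 'a :: semiring_1 mat) (pmap_mat n f)"
proof -
  let ?\<tau> = "the_inv_into {..<n} \<sigma>"
  have \<tau>: "?\<tau> i < n" "\<sigma> (?\<tau> i) = i" if "i < n" for i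
    using that bij_betwE[OF bij_betw_the_inv_into[OF bij]] f_the_inv_into_f_bij_betw[OF bij] by auto
  have closed: "pmap_closed n (Some \<circ> ?\<tau>)"
    using \<tau> unfolding pmap_closed_def by auto
  have "(pmap_mat n (Some \<circ> ?\<tau>) :: 'a mat) * pmap_mat n f * pmap_mat n (Some \<circ> \<sigma>)
      = pmap_mat n ((Some \<circ> \<sigma>) \<circ>\<^sub>m (f \<circ>\<^sub>m (Some \<circ> ?\<tau>)))"
    by (simp only: pmap_mat_mult closed pmap_closed_comp assms(2))
  also have "\<dots> = pmap_mat n g"
  proof (rule pmap_mat_cong)
    fix i assume "i < n"
    thus "((Some \<circ> \<sigma>) \<circ>\<^sub>m (f \<circ>\<^sub>m (Some \<circ> ?\<tau>))) i = g i"
      using conj[OF \<tau>(1)] \<tau>(2) by (cases "f (?\<tau> i)") (auto simp: map_comp_def)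
  qed
  finally have "similar_mat_wit (pmap_mat n g :: 'a mat) (pmap_mat n f)
      (pmap_mat n (Some \<circ> ?\<tau>)) (pmap_mat n (Some \<circ> \<sigma>))"
    using pmap_mat_perm_inverse[OF bij] by (intro similar_mat_witI) auto
  thus ?thesis unfolding similar_mat_def by blast
qed

lemma pmap_mat_row_echelon:
  assumes closed: "pmap_closed n h"
    and sorted: "\<And>i i' y'. i < i' \<Longrightarrow> i' < n \<Longrightarrow> h i' = Some y' \<Longrightarrow> \<exists>y<y'. h i = Some y"
  shows "row_echelon_form (pmap_mat n h :: 'a :: field mat)"
proof -
  define p where "p i = (case h i of Some y \<Rightarrow> y | None \<Rightarrow> n)" for i
  have inj: "i' = i" if "i < n" "i' < n" "h i = Some y" "h i' = Some y" for i i' y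
    using sorted[of i i' y] sorted[of i' i y] that by (cases i i' rule: linorder_cases) auto
  have "pivot_fun (pmap_mat n h :: 'a mat) p n"
  proof (rule pivot_funI)
    fix i assume i: "i < n"
    show "p i \<le> n" using pmap_closedD[OF closed i] by (cases "h i") (auto simp: p_def)
    show "pmap_mat n h $$ (i, j) = 0" if "j < p i" for j
      using i that pmap_closedD[OF closed i] by (cases "h i") (auto simp: p_def)
    show "p i < p (Suc i) \<or> p (Suc i) = n" if "Suc i < n"
      using sorted[of i "Suc i"] that by (cases "h (Suc i)") (auto simp: p_def)
    assume "p i < n"
    then obtain y where y: "h i = Some y" "p i = y" by (cases "h i") (auto simp: p_def)
    show "pmap_mat n h $$ (i, p i) = 1" using i y \<open>p i < n\<close> by simp
    show "pmap_mat n h $$ (i', p i) = 0" if "i' < n" "i' \<noteq> i" for i'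
      using i y \<open>p i < n\<close> that inj[of i i' y] by auto
  qed simp
  thus ?thesis unfolding row_echelon_form_def by auto
qed

lemma pmap_mat_kernel_dim_sorted:
  assumes "pmap_closed n h"
    and "\<And>i i' y'. i < i' \<Longrightarrow> i' < n \<Longrightarrow> h i' = Some y' \<Longrightarrow> \<exists>y<y'. h i = Some y"
  shows "kernel_dim (pmap_mat n h :: 'a :: field mat) = n - card (dom h \<inter> {..<n})"
proof -
  have "{i. i < n \<and> row (pmap_mat n h :: 'a mat) i \<noteq> 0\<^sub>v n} = dom h \<inter> {..<n}"
  proof (intro equalityI subsetI)
    fix i assume "i \<in> {i. i < n \<and> row (pmap_mat n h :: 'a mat) i \<noteq> 0\<^sub>v n}"
    thus "i \<in> dom h \<inter> {..<n}" by (auto intro!: eq_vecI)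
  next
    fix i assume "i \<in> dom h \<inter> {..<n}"
    then obtain y where "i < n" "h i = Some y" by auto
    moreover have "y < n" using pmap_closedD[OF assms(1)] calculation by blast
    ultimately have "row (pmap_mat n h :: 'a mat) i $ y \<noteq> 0\<^sub>v n $ y" by simp
    thus "i \<in> {i. i < n \<and> row (pmap_mat n h :: 'a mat) i \<noteq> 0\<^sub>v n}" using \<open>i < n\<close> by auto
  qed
  moreover note ref = pmap_mat_row_echelon[OF assms, where 'a = 'a]
  ultimately show ?thesis
    using find_base_vectors(6)[OF ref pmap_mat_carrier] by (simp add: kernel_dim_def)
qed

lemma pmap_mat_permute_rows:
  assumes bij: "bij_betw \<tau> {..<n} {..<n}"
  shows "kernel_dim (pmap_mat n (h \<circ> \<tau>) :: 'a :: field mat) = kernel_dim (pmap_mat n h :: 'a mat)"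
    and "card (dom (h \<circ> \<tau>) \<inter> {..<n}) = card (dom h \<inter> {..<n})"
proof -
  have "pmap_closed n (Some \<circ> \<tau>)" using bij_betwE[OF bij] by (auto simp: pmap_closed_def)
  hence "pmap_mat n (Some \<circ> \<tau>) * pmap_mat n h = (pmap_mat n (h \<circ>\<^sub>m (Some \<circ> \<tau>)) :: 'a mat)"
    by (rule pmap_mat_mult)
  also have "\<dots> = pmap_mat n (h \<circ> \<tau>)" by (rule pmap_mat_cong) (simp add: map_comp_def)
  finally have "pmap_mat n (Some \<circ> \<tau>) * pmap_mat n h = (pmap_mat n (h \<circ> \<tau>) :: 'a mat)" .
  moreover have "mat_kernel (pmap_mat n (Some \<circ> \<tau>) * pmap_mat n h :: 'a mat) = mat_kernel (pmap_mat n h)"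
    by (rule mat_kernel_mult_eq[OF pmap_mat_carrier pmap_mat_carrier pmap_mat_carrier
          pmap_mat_perm_inverse(1)[OF bij]])
  ultimately show "kernel_dim (pmap_mat n (h \<circ> \<tau>) :: 'a mat) = kernel_dim (pmap_mat n h :: 'a mat)"
    unfolding kernel_dim_def by simp
  have "\<tau> ` (dom (h \<circ> \<tau>) \<inter> {..<n}) = dom h \<inter> {..<n}"
  proof (intro equalityI subsetI)
    fix x assume x: "x \<in> dom h \<inter> {..<n}"
    hence "x \<in> \<tau> ` {..<n}" using bij by (simp add: bij_betw_def)
    then obtain i where "i < n" "x = \<tau> i" by auto
    thus "x \<in> \<tau> ` (dom (h \<circ> \<tau>) \<inter> {..<n})" using x by auto
  qed (use bij_betwE[OF bij] in auto)
  thus "card (dom (h \<circ> \<tau>) \<inter> {..<n}) = card (dom h \<inter> {..<n})"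
    by (intro bij_betw_same_card[of \<tau>] bij_betw_subset[OF bij]) auto
qed

lemma pmap_mat_kernel_dim:
  assumes closed: "pmap_closed n h" and inj: "inj_on h (dom h \<inter> {..<n})"
  shows "kernel_dim (pmap_mat n h :: 'a :: field mat) = n - card (dom h \<inter> {..<n})"
proof -
  define K where "K x = (case h x of Some y \<Rightarrow> y | None \<Rightarrow> n + x)" for x
  have K_Some: "K x = y" if "h x = Some y" for x y using that by (simp add: K_def)
  have K_None: "K x = n + x" if "h x = None" for x using that by (simp add: K_def)
  have "inj_on K {..<n}"
  proof (rule inj_onI)
    fix x y assume x: "x \<in> {..<n}" and y: "y \<in> {..<n}" and eq: "K x = K y"
    show "x = y"
    proof (cases "h x"; cases "h y")
      fix u v assume "h x = Some u" "h y = Some v"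
      thus "x = y" using eq x y inj_onD[OF inj, of x y] by (auto simp: K_Some)
    qed (use eq x y pmap_closedD[OF closed] K_Some K_None in fastforce)+
  qed
  then obtain \<tau> where bij: "bij_betw \<tau> {..<n} {..<n}"
    and sorted: "\<And>i i'. i < n \<Longrightarrow> i' < n \<Longrightarrow> K (\<tau> i) < K (\<tau> i') \<longleftrightarrow> i < i'"
    using sorting_permutation by blast
  have \<tau>: "\<tau> i < n" if "i < n" for i using bij_betwE[OF bij] that by auto
  have "kernel_dim (pmap_mat n (h \<circ> \<tau>) :: 'a mat) = n - card (dom (h \<circ> \<tau>) \<inter> {..<n})"
  proof (rule pmap_mat_kernel_dim_sorted)
    show "pmap_closed n (h \<circ> \<tau>)" using closed \<tau> by (auto simp: pmap_closed_def)
    fix i i' y' assume "i < i'" "i' < n" and y': "(h \<circ> \<tau>) i' = Some y'"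
    hence "K (\<tau> i) < K (\<tau> i')" using sorted[of i i'] by simp
    moreover have "K (\<tau> i') = y'" "y' < n"
      using y' K_Some pmap_closedD[OF closed \<tau>[OF \<open>i' < n\<close>]] by auto
    ultimately show "\<exists>y<y'. (h \<circ> \<tau>) i = Some y"
      using K_Some[of "\<tau> i"] K_None[of "\<tau> i"] by (cases "h (\<tau> i)") auto
  qed
  thus ?thesis by (simp add: pmap_mat_permute_rows[OF bij])
qed

lemma pmap_mat_jordan_nf_exists:
  fixes K :: "nat \<Rightarrow> 'b :: linorder"
  assumes closed: "pmap_closed n f" and inj: "inj_on K {..<n}"
    and incr: "\<And>x y. x < n \<Longrightarrow> f x = Some y \<Longrightarrow> K x < K y"
  shows "\<exists>n_as. jordan_nf (pmap_mat n f :: 'a :: field mat) n_as"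
proof -
  obtain \<tau> where bij: "bij_betw \<tau> {..<n} {..<n}"
    and sorted: "\<And>i i'. i < n \<Longrightarrow> i' < n \<Longrightarrow> K (\<tau> i) < K (\<tau> i') \<longleftrightarrow> i < i'"
    using sorting_permutation[OF inj] by blast
  define \<sigma> where "\<sigma> = the_inv_into {..<n} \<tau>"
  define g where "g i = map_option \<sigma> (f (\<tau> i))" for i
  have \<sigma>: "\<sigma> x < n" "\<tau> (\<sigma> x) = x" if "x < n" for x
    using that bij_betwE[OF bij_betw_the_inv_into[OF bij]] f_the_inv_into_f_bij_betw[OF bij]
    unfolding \<sigma>_def by auto
  have "bij_betw \<sigma> {..<n} {..<n}" unfolding \<sigma>_def by (rule bij_betw_the_inv_into[OF bij])
  hence "similar_mat (pmap_mat n g :: 'a mat) (pmap_mat n f)"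
    by (rule pmap_mat_similar[OF _ closed]) (simp add: g_def \<sigma>(2))
  moreover have "upper_triangular (pmap_mat n g :: 'a mat)"
  proof (rule upper_triangularI)
    fix i j assume "j < i" "i < dim_row (pmap_mat n g :: 'a mat)"
    hence i: "i < n" by simp
    have "g i \<noteq> Some j"
    proof
      assume "g i = Some j"
      then obtain y where y: "f (\<tau> i) = Some y" "j = \<sigma> y" by (auto simp: g_def)
      have "y < n" using pmap_closedD[OF closed _ y(1)] bij_betwE[OF bij] i by auto
      hence "i < j" using sorted[OF i \<sigma>(1), of y] incr[OF _ y(1)] bij_betwE[OF bij] i \<sigma>(2) y(2)
        by auto
      thus False using \<open>j < i\<close> by simp
    qed
    thus "pmap_mat n g $$ (i, j) = 0" using i \<open>j < i\<close> by simp
  qed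
  hence "jordan_nf (pmap_mat n g :: 'a mat) (triangular_to_jnf_vector (pmap_mat n g :: 'a mat))"
    by (rule triangular_to_jnf_vector[OF pmap_mat_carrier])
  ultimately show ?thesis
    unfolding jordan_nf_def using similar_mat_trans similar_mat_sym by blast
qed

section \<open>Jordan type from the ranks of powers\<close>

lemma jordan_nf_block_sizes_sum:
  assumes "jordan_nf (A :: 'a :: semiring_1 mat) n_as" "A \<in> carrier_mat n n"
  shows "sum_list (map fst n_as) = n"
proof -
  obtain m where "A \<in> carrier_mat m m" "jordan_matrix n_as \<in> carrier_mat m m"
    using assms(1) similar_matD unfolding jordan_nf_def by blast
  thus ?thesis using assms(2) jordan_matrix_dim(1)[of n_as] by (metis carrier_matD(1))
qed

lemma jordan_nf_eigenvalues_zero: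
  fixes A :: "'a :: field mat"
  assumes jnf: "jordan_nf A n_as" and A: "A \<in> carrier_mat n n"
    and full: "dim_gen_eigenspace A 0 k = n"
  shows "\<forall>p \<in> set n_as. snd p = 0"
proof (rule ccontr)
  have split: "sum_list (map fst n_as) = sum_list (map fst (filter (\<lambda>p. snd p = 0) n_as))
      + sum_list (map fst (filter (\<lambda>p. snd p \<noteq> 0) n_as))"
    by (induction n_as) auto
  assume "\<not> (\<forall>p \<in> set n_as. snd p = 0)"
  then obtain p where "p \<in> set n_as" "snd p \<noteq> 0" by blast
  moreover have "fst p \<noteq> 0" using jnf \<open>p \<in> set n_as\<close> unfolding jordan_nf_def by force
  ultimately have "sum_list (map fst (filter (\<lambda>p. snd p \<noteq> 0) n_as)) > 0"
    by (induction n_as) auto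
  moreover have "(\<Sum>s \<leftarrow> map fst [(s, e) \<leftarrow> n_as. e = 0]. min k s)
      \<le> sum_list (map fst (filter (\<lambda>p. snd p = 0) n_as))"
    by (induction n_as) (auto simp: split_beta)
  ultimately show False
    using full dim_gen_eigenspace[OF jnf, of 0 k] jordan_nf_block_sizes_sum[OF jnf A] split
    by linarith
qed

lemma jordan_nf_nilpotent_block_sizes:
  fixes A :: "'a :: field mat"
  assumes jnf: "jordan_nf A n_as" and A: "A \<in> carrier_mat n n"
    and ls: "0 \<notin> set ls" "sum_list ls = n"
    and dims: "\<And>k. dim_gen_eigenspace A 0 k = (\<Sum>s\<leftarrow>ls. min k s)"
  shows "mset (map fst n_as) = mset ls"
proof (rule multiset_eqI)
  define J where "J = map (\<lambda>s. (s, 0 :: 'a)) ls"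
  have jnfJ: "jordan_nf (jordan_matrix J) J"
    using ls(1) unfolding jordan_nf_def J_def
    by (auto intro: similar_mat_refl[OF jordan_matrix_carrier])
  \<comment> \<open>The block counts are functions of these dimensions, so compare with the Jordan matrix J.\<close>
  have dimsJ: "dim_gen_eigenspace (jordan_matrix J) 0 = dim_gen_eigenspace A 0"
    unfolding dims dim_gen_eigenspace_jordan_matrix J_def by (auto simp: o_def)
  have "(\<Sum>s\<leftarrow>ls. min n s) = n"
    using ls(2) member_le_sum_list[of _ ls] map_idI[of ls "min n"] by simp
  hence zero: "\<forall>p \<in> set n_as. snd p = 0"
    using jordan_nf_eigenvalues_zero[OF jnf A, of n] dims[of n] by simp
  have count_fst: "count (mset (map fst xs)) s = length (filter ((=) (s, 0)) xs)"
    if "\<forall>p \<in> set xs. snd p = (0 :: 'a)" for xs :: "(nat \<times> 'a) list" and s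
    using that by (induction xs) auto
  fix s
  show "count (mset (map fst n_as)) s = count (mset ls) s"
  proof (cases "s = 0")
    case True
    have "0 \<notin> set (map fst n_as)" using jnf unfolding jordan_nf_def by auto
    thus ?thesis using True ls(1) count_mset_0_iff by metis
  next
    case False
    have "count (mset (map fst n_as)) s = compute_nr_of_jordan_blocks A 0 s"
      using count_fst[OF zero] compute_nr_of_jordan_blocks[OF jnf False] by simp
    also have "\<dots> = compute_nr_of_jordan_blocks (jordan_matrix J) 0 s"
      unfolding compute_nr_of_jordan_blocks_def dimsJ ..
    also have "\<dots> = count (mset ls) s"
      using count_fst[of J s] compute_nr_of_jordan_blocks[OF jnfJ False]
      unfolding J_def by (simp add: o_def)
    finally show ?thesis .
  qed
qed

lemma pmap_mat_has_shape:
  fixes K :: "nat \<Rightarrow> 'b :: linorder"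
  assumes closed: "pmap_closed n f" and inj: "inj_on f (dom f \<inter> {..<n})"
    and injK: "inj_on K {..<n}" and incr: "\<And>x y. x < n \<Longrightarrow> f x = Some y \<Longrightarrow> K x < K y"
    and ls: "0 \<notin> set ls"
    and ranks: "\<And>k. card (dom (pmap_pow f k) \<inter> {..<n}) = (\<Sum>s\<leftarrow>ls. s - k)"
  shows "has_shape (pmap_mat n f :: 'a :: field mat) (mset ls)"
proof -
  obtain n_as where jnf: "jordan_nf (pmap_mat n f :: 'a mat) n_as"
    using pmap_mat_jordan_nf_exists[OF closed injK incr] by blast
  have sum: "sum_list ls = n" using ranks[of 0] by simp
  have "dim_gen_eigenspace (pmap_mat n f :: 'a mat) 0 k = (\<Sum>s\<leftarrow>ls. min k s)" for k
  proof -
    have "char_matrix (pmap_mat n f :: 'a mat) 0 = pmap_mat n f"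
      unfolding char_matrix_def by (intro eq_matI) auto
    hence "dim_gen_eigenspace (pmap_mat n f :: 'a mat) 0 k = kernel_dim (pmap_mat n (pmap_pow f k) :: 'a mat)"
      unfolding dim_gen_eigenspace_def by (simp add: pmap_mat_pow[OF closed])
    also have "\<dots> = n - (\<Sum>s\<leftarrow>ls. s - k)"
      using pmap_mat_kernel_dim[OF pmap_closed_pow[OF closed] pmap_pow_inj[OF closed inj]] ranks by simp
    also have "\<dots> = (\<Sum>s\<leftarrow>ls. min k s)"
    proof -
      have "(\<Sum>s\<leftarrow>ls. min k s) + (\<Sum>s\<leftarrow>ls. s - k) = sum_list ls"
        by (induction ls) auto
      thus ?thesis using sum by linarith
    qed
    finally show ?thesis .
  qed
  hence "mset (map fst n_as) = mset ls"
    by (intro jordan_nf_nilpotent_block_sizes[OF jnf pmap_mat_carrier ls sum])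
  thus ?thesis unfolding has_shape_def using jnf by blast
qed

lemma has_shape_similar:
  "similar_mat A B \<Longrightarrow> has_shape B p \<Longrightarrow> has_shape (A :: 'a :: semiring_1 mat) p"
  unfolding has_shape_def jordan_nf_def by (auto intro: similar_mat_trans)

lemma similar_mat_wit_conj_commute:
  assumes wit: "similar_mat_wit B G P Q" and F: "F \<in> carrier_mat n n" and B: "B \<in> carrier_mat n n"
    and FG: "F * G = G * F"
  shows "(P * F * Q) * B = B * (P * F * Q)"
proof -
  note PQ = similar_mat_witD2[OF B wit]
  have "(P * F * Q) * B = P * F * (Q * P) * G * Q"
    unfolding PQ(3) using PQ(5-7) F by (simp add: assoc_mult_mat[of _ n n _ n _ n])
  also have "\<dots> = P * (F * G) * Q"
    unfolding PQ(2) using PQ(5-7) F by (simp add: assoc_mult_mat[of _ n n _ n _ n])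
  also have "\<dots> = P * G * (Q * P) * F * Q"
    unfolding FG PQ(2) using PQ(5-7) F by (simp add: assoc_mult_mat[of _ n n _ n _ n])
  also have "\<dots> = B * (P * F * Q)"
    unfolding PQ(3) using PQ(5-7) F by (simp add: assoc_mult_mat[of _ n n _ n _ n])
  finally show ?thesis .
qed

lemma pmap_mat_commuting_in_shapes_NB:
  fixes B :: "'a :: field mat" and K :: "nat \<Rightarrow> 'b :: linorder"
  assumes simB: "similar_mat B (pmap_mat n g)" and closed_g: "pmap_closed n g"
    and closed: "pmap_closed n f" and inj: "inj_on f (dom f \<inter> {..<n})"
    and injK: "inj_on K {..<n}" and incr: "\<And>x y. x < n \<Longrightarrow> f x = Some y \<Longrightarrow> K x < K y"
    and comm: "\<And>x. x < n \<Longrightarrow> (g \<circ>\<^sub>m f) x = (f \<circ>\<^sub>m g) x"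
    and ls: "0 \<notin> set ls"
    and ranks: "\<And>k. card (dom (pmap_pow f k) \<inter> {..<n}) = (\<Sum>s\<leftarrow>ls. s - k)"
  shows "mset ls \<in> shapes_NB n B"
proof -
  obtain P Q where wit: "similar_mat_wit B (pmap_mat n g) P Q"
    using simB unfolding similar_mat_def by blast
  obtain m where "B \<in> carrier_mat m m" "(pmap_mat n g :: 'a mat) \<in> carrier_mat m m"
    using similar_matD[OF simB] by blast
  hence B: "B \<in> carrier_mat n n" by (metis carrier_matD(1) pmap_mat_dim(1))
  note PQ = similar_mat_witD2[OF B wit]
  define F where "F = (pmap_mat n f :: 'a mat)"
  define G where "G = (pmap_mat n g :: 'a mat)"
  define A where "A = P * F * Q"
  have car: "F \<in> carrier_mat n n" "G \<in> carrier_mat n n" "P \<in> carrier_mat n n" "Q \<in> carrier_mat n n"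
    using PQ unfolding F_def G_def by auto
  have FG: "F * G = G * F"
    unfolding F_def G_def pmap_mat_mult[OF closed] pmap_mat_mult[OF closed_g]
    using comm by (intro pmap_mat_cong) simp
  have AB: "A * B = B * A"
    unfolding A_def by (rule similar_mat_wit_conj_commute[OF wit[folded G_def] car(1) B FG])
  have witA: "similar_mat_wit A F P Q"
    unfolding A_def using car PQ(1,2) by (intro similar_mat_witI) auto
  have "s \<le> n" if "s \<in> set ls" for s
    using that ranks[of 0] member_le_sum_list[of s ls] by simp
  hence "(\<Sum>s\<leftarrow>ls. s - n) = 0" by (induction ls) auto
  hence "card (dom (pmap_pow f n) \<inter> {..<n}) = 0" using ranks[of n] by simp
  hence "F ^\<^sub>m n = 0\<^sub>m n n"
    unfolding F_def pmap_mat_pow[OF closed] pmap_mat_empty[symmetric]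
    by (intro pmap_mat_cong) (auto simp: dom_def)
  hence "A ^\<^sub>m n = 0\<^sub>m n n" using similar_mat_wit_pow_id[OF witA, of n] car by simp
  hence "nilpotent_mat A" unfolding nilpotent_mat_def A_def using car by auto
  moreover have "has_shape F (mset ls)"
    unfolding F_def by (rule pmap_mat_has_shape[OF closed inj injK incr ls ranks])
  hence "has_shape A (mset ls)"
    using has_shape_similar[of A F] witA unfolding similar_mat_def by blast
  ultimately show ?thesis unfolding shapes_NB_def A_def using car AB[unfolded A_def] by auto
qed

section \<open>Two Jordan blocks and a commuting partial map\<close>

definition two_block_shift :: "nat \<Rightarrow> nat \<Rightarrow> nat \<rightharpoonup> nat" where
  "two_block_shift p q x = (if Suc x < p + q \<and> Suc x \<noteq> p then Some (Suc x) else None)"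

lemma two_block_shift_closed: "pmap_closed (p + q) (two_block_shift p q)"
  unfolding pmap_closed_def two_block_shift_def by auto

lemma jordan_matrix_two_blocks:
  "(jordan_matrix [(p, 0), (q, 0)] :: 'a :: semiring_1 mat) = pmap_mat (p + q) (two_block_shift p q)"
  by (intro eq_matI) (auto simp: jordan_matrix_def two_block_shift_def Let_def jordan_block_def)

lemma two_block_shift_swap_similar:
  "similar_mat (pmap_mat (p + q) (two_block_shift p q) :: 'a :: semiring_1 mat)
    (pmap_mat (p + q) (two_block_shift q p))"
proof (rule pmap_mat_similar)
  define \<sigma> where "\<sigma> x = (if x < q then p + x else x - q)" for x
  show "bij_betw \<sigma> {..<p + q} {..<p + q}"
    by (rule bij_betw_byWitness[of _ "\<lambda>y. if y < p then y + q else y - p"]) (auto simp: \<sigma>_def)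
  show "pmap_closed (p + q) (two_block_shift q p)"
    using two_block_shift_closed[of q p] by (simp add: add.commute)
  show "two_block_shift p q (\<sigma> x) = map_option \<sigma> (two_block_shift q p x)" if "x < p + q" for x
    using that unfolding \<sigma>_def two_block_shift_def by auto
qed

lemma nilpotent_two_blocks_similar:
  fixes B :: "'a :: field mat"
  assumes B: "B \<in> carrier_mat n n" "nilpotent_mat B"
    and shape: "has_shape B {#l1, l2#}" and n: "n = l1 + l2"
  shows "similar_mat B (pmap_mat n (two_block_shift l1 l2))"
proof -
  obtain n_as where jnf: "jordan_nf B n_as" and sizes: "mset (map fst n_as) = {#l1, l2#}"
    using shape unfolding has_shape_def by blast
  obtain k where "B ^\<^sub>m k = 0\<^sub>m n n" using B unfolding nilpotent_mat_def by auto
  moreover have "char_matrix B 0 = B" unfolding char_matrix_def using B(1) by (intro eq_matI) auto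
  ultimately have "dim_gen_eigenspace B 0 k = kernel_dim (pmap_mat n Map.empty :: 'a mat)"
    unfolding dim_gen_eigenspace_def pmap_mat_empty by simp
  also have "\<dots> = n" by (subst pmap_mat_kernel_dim) (auto simp: pmap_closed_def)
  finally have zero: "\<forall>p \<in> set n_as. snd p = 0" by (rule jordan_nf_eigenvalues_zero[OF jnf B(1)])
  obtain p q where n_as: "n_as = [(p, 0), (q, 0)]"
  proof -
    have "length n_as = 2" using arg_cong[OF sizes, of size] by simp
    then obtain x y where "n_as = [x, y]" by (auto simp: numeral_2_eq_2 length_Suc_conv)
    thus thesis using that zero by (cases x, cases y) auto
  qed
  have sim: "similar_mat B (pmap_mat (p + q) (two_block_shift p q))"
    using jnf unfolding jordan_nf_def n_as jordan_matrix_two_blocks by simp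
  have "{#p, q#} = {#l1, l2#}" using sizes n_as by simp
  hence "p = l1 \<and> q = l2 \<or> p = l2 \<and> q = l1" by (auto simp: add_eq_conv_ex)
  thus ?thesis
  proof
    assume "p = l2 \<and> q = l1"
    thus ?thesis using similar_mat_trans[OF sim two_block_shift_swap_similar] n by (simp add: add.commute)
  qed (use sim n in simp)
qed

definition cross_map :: "nat \<Rightarrow> nat \<Rightarrow> nat \<Rightarrow> nat \<Rightarrow> nat \<rightharpoonup> nat" where
  "cross_map l1 l2 a b x =
    (if x < l1 then (if x + a < l2 then Some (l1 + x + a) else None)
     else (if x - l1 + b < l1 then Some (x - l1 + b) else None))"

text \<open>Along cross_map the key grows by 2(a + b) \<plusminus> 1, and the two chains get keys of different
  parity; so cross_map is acyclic and its matrix is triangular after sorting by the key.\<close>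

definition cross_key :: "nat \<Rightarrow> nat \<Rightarrow> nat \<Rightarrow> nat \<Rightarrow> int" where
  "cross_key l1 a b x =
    (if x < l1 then 4 * int x else 4 * (int x - int l1) + 2 * int b - 2 * int a + 1)"

context
  fixes l1 l2 a b :: nat
  assumes l21: "l2 \<le> l1" and b: "l1 \<le> b + l2" and ab: "1 \<le> a + b"
begin

lemma cross_map_closed: "pmap_closed (l1 + l2) (cross_map l1 l2 a b)"
  unfolding pmap_closed_def cross_map_def by auto

lemma cross_map_inj: "inj_on (cross_map l1 l2 a b) (dom (cross_map l1 l2 a b) \<inter> {..<l1 + l2})"
  by (rule inj_onI) (auto simp: cross_map_def split: if_splits)

lemma cross_key_inj: "inj_on (cross_key l1 a b) {..<l1 + l2}"
proof (rule inj_onI)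
  fix x y assume eq: "cross_key l1 a b x = cross_key l1 a b y"
  have parity: "4 * int u \<noteq> 4 * (int v - int l1) + 2 * int b - 2 * int a + 1" for u v
    by presburger
  show "x = y"
    using eq parity[of x y] parity[of y x] unfolding cross_key_def by (auto split: if_splits)
qed

lemma cross_key_less:
  "x < l1 + l2 \<Longrightarrow> cross_map l1 l2 a b x = Some y \<Longrightarrow> cross_key l1 a b x < cross_key l1 a b y"
  unfolding cross_map_def cross_key_def using ab by (auto split: if_splits)

lemma cross_map_commutes:
  "x < l1 + l2 \<Longrightarrow> (two_block_shift l1 l2 \<circ>\<^sub>m cross_map l1 l2 a b) x
    = (cross_map l1 l2 a b \<circ>\<^sub>m two_block_shift l1 l2) x"
  unfolding cross_map_def two_block_shift_def using l21 b by (auto simp: map_comp_def)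

lemma cross_map_square:
  "y < l1 + l2 \<Longrightarrow> (cross_map l1 l2 a b \<circ>\<^sub>m cross_map l1 l2 a b) y =
    (if y < l1 then (if y + (a + b) < l1 then Some (y + (a + b)) else None)
     else (if y + (a + b) < l1 + l2 then Some (y + (a + b)) else None))"
  unfolding cross_map_def using l21 b by (auto simp: map_comp_def)

lemma cross_map_pow_even:
  "x < l1 + l2 \<Longrightarrow> pmap_pow (cross_map l1 l2 a b) (2 * m) x =
    (if x < l1 then (if x + m * (a + b) < l1 then Some (x + m * (a + b)) else None)
     else (if x + m * (a + b) < l1 + l2 then Some (x + m * (a + b)) else None))"
proof (induction m)
  case (Suc m)
  have "pmap_pow (cross_map l1 l2 a b) (2 * Suc m) x
      = (case pmap_pow (cross_map l1 l2 a b) (2 * m) x of None \<Rightarrow> None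
         | Some y \<Rightarrow> (cross_map l1 l2 a b \<circ>\<^sub>m cross_map l1 l2 a b) y)"
    by (simp add: map_comp_def split: option.split)
  thus ?case using Suc cross_map_square[of "x + m * (a + b)"] by (auto simp: algebra_simps)
qed simp

lemma cross_map_pow_odd:
  "x < l1 + l2 \<Longrightarrow> pmap_pow (cross_map l1 l2 a b) (Suc (2 * m)) x =
    (if x < l1 then (if x + m * (a + b) + a < l2 then Some (l1 + x + m * (a + b) + a) else None)
     else (if x + m * (a + b) + b < l1 + l1 then Some (x + m * (a + b) + b - l1) else None))"
  using cross_map_pow_even[of x m] l21 b by (auto simp: cross_map_def map_comp_def algebra_simps)

lemma cross_map_rank_even:
  "card (dom (pmap_pow (cross_map l1 l2 a b) (2 * m)) \<inter> {..<l1 + l2})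
    = (l1 - m * (a + b)) + (l2 - m * (a + b))"
proof -
  have "dom (pmap_pow (cross_map l1 l2 a b) (2 * m)) \<inter> {..<l1 + l2}
      = {..<l1 - m * (a + b)} \<union> {l1..<l1 + l2 - m * (a + b)}"
    by (auto simp: cross_map_pow_even split: if_splits)
  moreover have "card ({..<l1 - m * (a + b)} \<union> {l1..<l1 + l2 - m * (a + b)})
      = (l1 - m * (a + b)) + (l2 - m * (a + b))"
    by (subst card_Un_disjoint) auto
  ultimately show ?thesis by simp
qed

lemma cross_map_rank_odd:
  "card (dom (pmap_pow (cross_map l1 l2 a b) (Suc (2 * m))) \<inter> {..<l1 + l2})
    = (l2 - a - m * (a + b)) + (l1 - b - m * (a + b))"
proof -
  have "dom (pmap_pow (cross_map l1 l2 a b) (Suc (2 * m))) \<inter> {..<l1 + l2}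
      = {..<l2 - a - m * (a + b)} \<union> {l1..<l1 + (l1 - b - m * (a + b))}"
    using l21 b by (auto simp del: pmap_pow.simps simp: cross_map_pow_odd split: if_splits)
  moreover have "card ({..<l2 - a - m * (a + b)} \<union> {l1..<l1 + (l1 - b - m * (a + b))})
      = (l2 - a - m * (a + b)) + (l1 - b - m * (a + b))"
    using l21 by (subst card_Un_disjoint) auto
  ultimately show ?thesis by simp
qed

lemma cross_map_in_shapes_NB:
  fixes B :: "'a :: field mat"
  assumes simB: "similar_mat B (pmap_mat (l1 + l2) (two_block_shift l1 l2))"
    and ls: "0 \<notin> set ls"
    and even: "\<And>m. (l1 - m * (a + b)) + (l2 - m * (a + b)) = (\<Sum>s\<leftarrow>ls. s - 2 * m)"
    and odd: "\<And>m. (l2 - a - m * (a + b)) + (l1 - b - m * (a + b)) = (\<Sum>s\<leftarrow>ls. s - Suc (2 * m))"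
  shows "mset ls \<in> shapes_NB (l1 + l2) B"
proof (rule pmap_mat_commuting_in_shapes_NB[OF simB two_block_shift_closed cross_map_closed
      cross_map_inj cross_key_inj cross_key_less cross_map_commutes ls])
  fix k :: nat
  have "k = 2 * (k div 2) \<or> k = Suc (2 * (k div 2))" by presburger
  thus "card (dom (pmap_pow (cross_map l1 l2 a b) k) \<inter> {..<l1 + l2}) = (\<Sum>s\<leftarrow>ls. s - k)"
    using cross_map_rank_even[of "k div 2"] cross_map_rank_odd[of "k div 2"] even odd by metis
qed

end

section \<open>The three cases\<close>

definition three_level_partition :: "nat \<Rightarrow> nat \<Rightarrow> nat \<Rightarrow> nat \<Rightarrow> nat list" where
  "three_level_partition p \<alpha> \<beta> \<gamma> = replicate \<alpha> (p + 1) @ replicate \<beta> p @ replicate \<gamma> (p - 1)"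

lemma mset_three_level_partition:
  "mset (three_level_partition p \<alpha> \<beta> \<gamma>)
    = replicate_mset \<alpha> (p + 1) + replicate_mset \<beta> p + replicate_mset \<gamma> (p - 1)"
  by (simp add: three_level_partition_def add.assoc)

lemma three_level_partition_pos: "1 < p \<Longrightarrow> 0 \<notin> set (three_level_partition p \<alpha> \<beta> \<gamma>)"
  by (auto simp: three_level_partition_def)

lemma three_level_partition_tail:
  fixes p \<alpha> \<beta> \<gamma> w n t :: nat
  assumes w: "\<alpha> + \<beta> + \<gamma> = w" and n: "p * w + \<alpha> = n + \<gamma>"
  shows "(\<Sum>s\<leftarrow>three_level_partition p \<alpha> \<beta> \<gamma>. s - t)
    = (if t < p then n - t * w else if t = p then \<alpha> else 0)"
proof (cases t p rule: linorder_cases)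
  case less
  then obtain d where p: "p = Suc (t + d)" using less_imp_Suc_add by blast
  have "(\<Sum>s\<leftarrow>three_level_partition p \<alpha> \<beta> \<gamma>. s - t) + t * w + \<gamma> = p * w + \<alpha>"
    unfolding p w[symmetric] by (simp add: three_level_partition_def sum_list_replicate algebra_simps)
  thus ?thesis using less n by (simp add: mult.assoc)
qed (simp_all add: three_level_partition_def sum_list_replicate)

lemma three_level_partition_rect_tail:
  fixes n w t :: nat
  assumes "0 < w"
  shows "(\<Sum>s\<leftarrow>three_level_partition (n div w + 1) 0 (n mod w) (w - n mod w). s - t) = n - t * w"
proof -
  have "n mod w < w" using assms by simp
  moreover have "(n div w + 1) * w = n div w * w + w" by simp
  ultimately have "(n div w + 1) * w + 0 = n + (w - n mod w)"
    using div_mult_mod_eq[of n w] by linarith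
  moreover have "n - t * w = 0" if "n div w + 1 \<le> t"
  proof -
    have "n div w * w + w \<le> t * w" using mult_le_mono1[OF that, of w] by simp
    thus ?thesis using \<open>n mod w < w\<close> div_mult_mod_eq[of n w] by linarith
  qed
  ultimately show ?thesis
    using three_level_partition_tail[of 0 "n mod w" "w - n mod w" w "n div w + 1" n t] \<open>n mod w < w\<close>
    by (auto simp: not_less)
qed

lemma mult_add_le_of_less: "(m :: nat) < k \<Longrightarrow> m * w + w \<le> k * w"
  using mult_le_mono1[of "Suc m" k w] by (simp add: mult.assoc)

text \<open>The rank counts of cross_map for a = l and b = l1 - l2 + j, where l1 - b = l2 - j.\<close>

lemma rank_counts_case_a:
  fixes l1 l2 j l w k m :: nat
  assumes w: "w + l2 = l1 + j + l" and k: "l2 \<le> k * w" "k * w < l1"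
  shows "(l1 - m * w) + (l2 - m * w)
      = (if 2 * m < 2 * k then (l1 + l2) - 2 * m * w else if 2 * m = 2 * k then l1 - k * w else 0)"
      (is ?even)
    and "(l2 - l - m * w) + (l2 - j - m * w)
      = (if Suc (2 * m) < 2 * k then (l1 + l2) - Suc (2 * m) * w
         else if Suc (2 * m) = 2 * k then l1 - k * w else 0)" (is ?odd)
proof -
  consider "m < k" | "m = k" | "k < m" by linarith
  thus ?even
  proof cases
    case 1 thus ?thesis using mult_add_le_of_less[OF 1, of w] w k by (simp add: mult.assoc)
  next
    case 3 thus ?thesis using mult_add_le_of_less[OF 3, of w] w k by (simp add: mult.assoc)
  qed (use k in simp)
  have parity: "Suc (2 * m) \<noteq> 2 * k" by presburger
  consider "m < k" | "k \<le> m" by linarith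
  thus ?odd
  proof cases
    case 1 thus ?thesis using mult_add_le_of_less[OF 1, of w] w k parity by (simp add: mult.assoc)
  next
    case 2
    hence "k * w \<le> m * w" by (rule mult_le_mono1)
    hence "(l2 - l - m * w) + (l2 - j - m * w) = 0" using w k by linarith
    thus ?thesis using 2 parity by simp
  qed
qed

lemma rank_counts_case_b:
  fixes l1 l2 j l w k m :: nat
  assumes w: "w + l2 = l1 + j + l" and jl: "j \<le> l" and l21: "l2 \<le> l1"
    and k: "l1 \<le> k * w + l" "k * w + j < l2"
  shows "(l1 - m * w) + (l2 - m * w)
      = (if 2 * m < 2 * k + 1 then (l1 + l2) - 2 * m * w
         else if 2 * m = 2 * k + 1 then l2 - k * w - j else 0)" (is ?even)
    and "(l2 - l - m * w) + (l2 - j - m * w)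
      = (if Suc (2 * m) < 2 * k + 1 then (l1 + l2) - Suc (2 * m) * w
         else if Suc (2 * m) = 2 * k + 1 then l2 - k * w - j else 0)" (is ?odd)
proof -
  have parity: "2 * m \<noteq> 2 * k + 1" by presburger
  consider "m \<le> k" | "k < m" by linarith
  thus ?even
  proof cases
    case 1
    hence "m * w \<le> k * w" by (rule mult_le_mono1)
    hence "(l1 - m * w) + (l2 - m * w) = (l1 + l2) - 2 * (m * w)" using k l21 by linarith
    thus ?thesis using 1 by (simp add: mult.assoc)
  next
    case 2
    thus ?thesis using mult_add_le_of_less[OF 2, of w] w k l21 parity by (simp add: mult.assoc)
  qed
  consider "m < k" | "m = k" | "k < m" by linarith
  thus ?odd
  proof cases
    case 1 thus ?thesis using mult_add_le_of_less[OF 1, of w] w k jl l21 by (simp add: mult.assoc)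
  next
    case 3 thus ?thesis using mult_add_le_of_less[OF 3, of w] w k l21 by (simp add: mult.assoc)
  qed (use k l21 in simp)
qed

lemma diff_add_diff_balanced: "(x :: nat) \<le> y + 1 \<Longrightarrow> y \<le> x + 1 \<Longrightarrow> (x - m) + (y - m) = (x + y) - 2 * m"
  by linarith

lemma shapes_NB_case_a:
  fixes B :: "'a :: field mat" and k :: int
  assumes simB: "similar_mat B (pmap_mat (l1 + l2) (two_block_shift l1 l2))"
    and l21: "l2 \<le> l1" and jl: "j \<le> l" "l < l2" and w: "w = l1 - l2 + j + l"
    and k: "int l2 \<le> k * int w" "k * int w < int l1"
  shows "replicate_mset (nat (int l1 - k * int w)) (nat (2 * k + 1))
      + replicate_mset (w + l2 - l1) (nat (2 * k))
      + replicate_mset (nat (k * int w - int l2)) (nat (2 * k - 1)) \<in> shapes_NB (l1 + l2) B"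
proof -
  have "0 < k * int w" using k(1) jl(2) by linarith
  hence "0 < k" by (simp add: zero_less_mult_iff)
  then obtain k0 where k0: "k = int k0" "0 < k0" using pos_int_cases by blast
  have K: "l2 \<le> k0 * w" "k0 * w < l1" using k unfolding k0(1) by (simp_all flip: of_nat_mult)
  have wsum: "w + l2 = l1 + j + l" and wab: "l + (l1 - l2 + j) = w" using w l21 by auto
  let ?ls = "three_level_partition (2 * k0) (l1 - k0 * w) (w + l2 - l1) (k0 * w - l2)"
  have tail: "(\<Sum>s\<leftarrow>?ls. s - t)
      = (if t < 2 * k0 then (l1 + l2) - t * w else if t = 2 * k0 then l1 - k0 * w else 0)" for t
    by (rule three_level_partition_tail) (use K wsum in \<open>simp_all add: mult.assoc\<close>)
  have "mset ?ls \<in> shapes_NB (l1 + l2) B"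
  proof (rule cross_map_in_shapes_NB[where a = l and b = "l1 - l2 + j", unfolded wab])
    show "l2 \<le> l1" "l1 \<le> l1 - l2 + j + l2" using l21 by auto
    show "1 \<le> w" using K(1) jl(2) by (cases w) auto
    show "similar_mat B (pmap_mat (l1 + l2) (two_block_shift l1 l2))" by (rule simB)
    show "0 \<notin> set ?ls" using k0(2) by (intro three_level_partition_pos) simp
    fix m
    show "(l1 - m * w) + (l2 - m * w) = (\<Sum>s\<leftarrow>?ls. s - 2 * m)"
      unfolding tail using rank_counts_case_a(1)[OF wsum K] by simp
    show "(l2 - l - m * w) + (l1 - (l1 - l2 + j) - m * w) = (\<Sum>s\<leftarrow>?ls. s - Suc (2 * m))"
      unfolding tail using rank_counts_case_a(2)[OF wsum K] l21 by simp
  qed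
  moreover have "nat (int l1 - k * int w) = l1 - k0 * w" "nat (k * int w - int l2) = k0 * w - l2"
    "nat (2 * k + 1) = 2 * k0 + 1" "nat (2 * k) = 2 * k0" "nat (2 * k - 1) = 2 * k0 - 1"
    using k0 by (simp_all flip: of_nat_mult add: nat_diff_distrib)
  ultimately show ?thesis by (simp add: mset_three_level_partition)
qed

lemma shapes_NB_case_b:
  fixes B :: "'a :: field mat" and k :: int
  assumes simB: "similar_mat B (pmap_mat (l1 + l2) (two_block_shift l1 l2))"
    and l21: "l2 \<le> l1" and jl: "j \<le> l" "l < l2" and w: "w = l1 - l2 + j + l"
    and k: "int l1 - int l \<le> k * int w" "k * int w < int l2 - int j"
  shows "replicate_mset (nat (int l2 - k * int w - int j)) (nat (2 * k + 2))
      + replicate_mset (w + j - l) (nat (2 * k + 1))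
      + replicate_mset (nat (k * int w + int l - int l2)) (nat (2 * k)) \<in> shapes_NB (l1 + l2) B"
proof -
  have "0 < k * int w" using k(1) l21 jl(2) by linarith
  hence "0 < k" by (simp add: zero_less_mult_iff)
  then obtain k0 where k0: "k = int k0" "0 < k0" using pos_int_cases by blast
  have K: "l1 \<le> k0 * w + l" "k0 * w + j < l2" using k unfolding k0(1) by (simp_all flip: of_nat_mult)
  have wsum: "w + l2 = l1 + j + l" and wab: "l + (l1 - l2 + j) = w" using w l21 by auto
  let ?ls = "three_level_partition (2 * k0 + 1) (l2 - k0 * w - j) (w + j - l) (k0 * w + l - l2)"
  have tail: "(\<Sum>s\<leftarrow>?ls. s - t)
      = (if t < 2 * k0 + 1 then (l1 + l2) - t * w else if t = 2 * k0 + 1 then l2 - k0 * w - j else 0)" for t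
  proof (rule three_level_partition_tail)
    show "(l2 - k0 * w - j) + (w + j - l) + (k0 * w + l - l2) = w" using K wsum l21 by linarith
    have "(2 * k0 + 1) * w = 2 * (k0 * w) + w" by simp
    thus "(2 * k0 + 1) * w + (l2 - k0 * w - j) = (l1 + l2) + (k0 * w + l - l2)"
      using K wsum l21 by linarith
  qed
  have "mset ?ls \<in> shapes_NB (l1 + l2) B"
  proof (rule cross_map_in_shapes_NB[where a = l and b = "l1 - l2 + j", unfolded wab])
    show "l2 \<le> l1" "l1 \<le> l1 - l2 + j + l2" using l21 by auto
    show "1 \<le> w" using K(1) l21 jl(2) by (cases w) auto
    show "similar_mat B (pmap_mat (l1 + l2) (two_block_shift l1 l2))" by (rule simB)
    show "0 \<notin> set ?ls" using k0(2) by (intro three_level_partition_pos) simp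
    fix m
    show "(l1 - m * w) + (l2 - m * w) = (\<Sum>s\<leftarrow>?ls. s - 2 * m)"
      unfolding tail using rank_counts_case_b(1)[OF wsum jl(1) l21 K] by simp
    show "(l2 - l - m * w) + (l1 - (l1 - l2 + j) - m * w) = (\<Sum>s\<leftarrow>?ls. s - Suc (2 * m))"
      unfolding tail using rank_counts_case_b(2)[OF wsum jl(1) l21 K] l21 by simp
  qed
  moreover have "nat (int l2 - k * int w - int j) = l2 - k0 * w - j"
    "nat (k * int w + int l - int l2) = k0 * w + l - l2"
    "nat (2 * k + 2) = (2 * k0 + 1) + 1" "nat (2 * k + 1) = 2 * k0 + 1" "nat (2 * k) = 2 * k0 + 1 - 1"
    using k0 by (simp_all flip: of_nat_mult add: nat_diff_distrib)
  ultimately show ?thesis by (simp add: mset_three_level_partition)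
qed

lemma shapes_NB_case_c:
  fixes B :: "'a :: field mat"
  assumes simB: "similar_mat B (pmap_mat (l1 + l2) (two_block_shift l1 l2))"
    and l21: "l2 \<le> l1" and jl: "j \<le> l" "l < l2" and w: "w = l1 - l2 + j + l" "1 \<le> w"
    and not_a: "\<not> (\<exists>k :: int. int l2 \<le> k * int w \<and> k * int w < int l1)"
  shows "almost_rect (l1 + l2) w \<in> shapes_NB (l1 + l2) B"
proof -
  define h where "h = (j + l) div 2"
  have h: "2 * h \<le> j + l" "j + l \<le> 2 * h + 1" unfolding h_def by auto
  have wab: "h + (l1 - l2 + (j + l - h)) = w" using w(1) l21 h by auto
  have wn: "w \<le> l1 + l2" using w(1) jl l21 by linarith
  have w0: "0 < w" using w(2) by simp
  let ?ls = "three_level_partition ((l1 + l2) div w + 1) 0 ((l1 + l2) mod w) (w - (l1 + l2) mod w)"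
  have "mset ?ls \<in> shapes_NB (l1 + l2) B"
  proof (rule cross_map_in_shapes_NB[where a = h and b = "l1 - l2 + (j + l - h)", unfolded wab])
    show "l2 \<le> l1" "l1 \<le> l1 - l2 + (j + l - h) + l2" "1 \<le> w" using l21 w(2) by auto
    show "similar_mat B (pmap_mat (l1 + l2) (two_block_shift l1 l2))" by (rule simB)
    show "0 \<notin> set ?ls"
      using wn w(2) by (intro three_level_partition_pos) (simp add: div_greater_zero_iff)
    fix m
    have "\<not> (l2 \<le> m * w \<and> m * w < l1)"
      using not_a by (metis of_nat_less_iff of_nat_le_iff of_nat_mult)
    thus "(l1 - m * w) + (l2 - m * w) = (\<Sum>s\<leftarrow>?ls. s - 2 * m)"
      unfolding three_level_partition_rect_tail[OF w0] using l21
      by (simp add: mult.assoc) linarith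
    have b: "l1 - (l1 - l2 + (j + l - h)) = l2 - (j + l - h)" using l21 by simp
    have balanced: "(l2 - h - m * w) + (l2 - (j + l - h) - m * w)
        = (l2 - h + (l2 - (j + l - h))) - 2 * (m * w)"
      using h by (intro diff_add_diff_balanced) linarith+
    have "(l2 - h + (l2 - (j + l - h))) + w = l1 + l2" using l21 jl h w(1) by linarith
    moreover have "Suc (2 * m) * w = w + 2 * (m * w)" by simp
    ultimately show "(l2 - h - m * w) + (l1 - (l1 - l2 + (j + l - h)) - m * w)
        = (\<Sum>s\<leftarrow>?ls. s - Suc (2 * m))"
      unfolding three_level_partition_rect_tail[OF w0] b balanced by linarith
  qed
  moreover have "almost_rect (l1 + l2) w = mset ?ls"
    using wn by (simp add: almost_rect_def mset_three_level_partition)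
  ultimately show ?thesis by simp
qed

text \<open>Case (c) only uses that
  (a) does not apply.\<close>

theorem theorem3p6:
  fixes B :: "'a :: field_char_0 mat"
    and n l1 l2 j l w :: nat
  assumes alg_closed: "\<And>q :: 'a poly. degree q > 0 \<Longrightarrow> \<exists>x. poly q x = 0"
    and B: "B \<in> carrier_mat n n" "nilpotent_mat B"
    and shB: "has_shape B {#l1, l2#}"
    and l12: "l1 \<ge> l2" "l2 \<ge> 1" "n = l1 + l2"
    and jl: "j \<le> l" "l < l2"
    and w: "w = l1 - l2 + j + l" "w \<ge> 1"
  shows
    "(\<forall>k::int. int l2 \<le> k * int w \<and> k * int w < int l1 \<longrightarrow>
        replicate_mset (nat (int l1 - k * int w)) (nat (2 * k + 1))
      + replicate_mset (w + l2 - l1) (nat (2 * k))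
      + replicate_mset (nat (k * int w - int l2)) (nat (2 * k - 1)) \<in> shapes_NB n B)
   \<and> (\<forall>k::int. int l1 - int l \<le> k * int w \<and> k * int w < int l2 - int j \<longrightarrow>
        replicate_mset (nat (int l2 - k * int w - int j)) (nat (2 * k + 2))
      + replicate_mset (w + j - l) (nat (2 * k + 1))
      + replicate_mset (nat (k * int w + int l - int l2)) (nat (2 * k)) \<in> shapes_NB n B)
   \<and> ((\<not> (\<exists>k::int. int l2 \<le> k * int w \<and> k * int w < int l1))
       \<and> (\<not> (\<exists>k::int. int l1 - int l \<le> k * int w \<and> k * int w < int l2 - int j))
       \<longrightarrow> almost_rect n w \<in> shapes_NB n B)"
proof -
  have "similar_mat B (pmap_mat (l1 + l2) (two_block_shift l1 l2))"
    using nilpotent_two_blocks_similar[OF B shB l12(3)] l12(3) by simp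
  thus ?thesis
    using shapes_NB_case_a[of B l1 l2 j l w] shapes_NB_case_b[of B l1 l2 j l w]
      shapes_NB_case_c[of B l1 l2 j l w] l12 jl w by blast
qed

end
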